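(* Let $X$ be a vector lattice and let $l : X \to \mathbb{R}$ be an order bounded linear functional. Then $\ker(l)$ is a Grothendieck subspace of $X$ if and only if $\ker(|l|)$ is a Grothendieck subspace of $X$, where $|l|$ is the modulus of $l$.
   Context: The modulus of an order bounded functional $l$ is $|l| = l \vee (-l)$ in the Riesz space of order bounded functionals. A linear subspace $H$ of a vector lattice is called a Grothendieck subspace (or $G$-space) if for all $x, y \in H$ one has $x \vee y \vee 0 + x \wedge y \wedge 0 \in H$. *)

theory Defs
  imports Main "HOL-Analysis.Analysis"
begin

class vector_lattice = ordered_real_vector + lattice

definition order_bounded_functional :: "('a::vector_lattice \<Rightarrow> real) \<Rightarrow> bool" where
  "order_bounded_functional l \<longleftrightarrow> linear l \<and>
     (\<forall>a b. a \<le> b \<longrightarrow> bdd_above (l ` {a..b}) \<and> bdd_below (l ` {a..b}))"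

definition functional_le :: "('a::vector_lattice \<Rightarrow> real) \<Rightarrow> ('a \<Rightarrow> real) \<Rightarrow> bool" where
  "functional_le f g \<longleftrightarrow> (\<forall>x. 0 \<le> x \<longrightarrow> f x \<le> g x)"

definition functional_modulus :: "('a::vector_lattice \<Rightarrow> real) \<Rightarrow> ('a \<Rightarrow> real)" where
  "functional_modulus l = (THE m. order_bounded_functional m \<and>
       functional_le l m \<and> functional_le (\<lambda>x. - l x) m \<and>
       (\<forall>g. order_bounded_functional g \<and> functional_le l g \<and> functional_le (\<lambda>x. - l x) g
            \<longrightarrow> functional_le m g))"

definition kernel :: "('a \<Rightarrow> real) \<Rightarrow> 'a set" where
  "kernel l = {x. l x = 0}"

definition grothendieck_subspace :: "'a::vector_lattice set \<Rightarrow> bool" where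
  "grothendieck_subspace H \<longleftrightarrow> subspace H \<and>
     (\<forall>x\<in>H. \<forall>y\<in>H. sup (sup x y) 0 + inf (inf x y) 0 \<in> H)"

end

theory Submission
  imports Defs "HOL-Library.Lattice_Algebras"
begin

text \<open>
  Let m = |l|, and say that m charges x if m x \<noteq> 0. Both kernels turn out to be G-spaces
  exactly when m charges no three pairwise disjoint positive elements. If a linear functional f
  is non-zero on pairwise disjoint p, q, r, then x = p / f p - q / f q and y = p / f p - r / f r
  lie in ker f, but the G-combination of x and y is p / f p - q / f q - r / f r, on which f
  takes the value -1. If m charges three disjoint elements then so does l, because m a \<noteq> 0
  forces l v \<noteq> 0 for some 0 \<le> v \<le> a.

  Conversely, if m charges no three disjoint elements, every functional dominated by m is a
  linear combination of at most two real lattice homomorphisms: the restrictions of m to the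
  bands of two disjoint charged elements, or m itself. The kernel of such a combination is a
  G-space, since lattice homomorphisms commute with the G-combination and the G-combination
  of reals is homogeneous.
\<close>

subclass (in vector_lattice) lattice_ab_group_add ..

(* Otherwise simp rewrites truncations such as x - inf x y into suprema. *)
declare diff_inf_eq_sup [simp del] diff_sup_eq_inf [simp del]

lemma sup_eq_add_pprt: "sup a b = b + pprt (a - b)"
  for a b :: "'a::lattice_ab_group_add"
  by (simp add: pprt_def add_sup_distrib_left)

lemma inf_eq_diff_pprt: "inf a b = a - pprt (a - b)"
  for a b :: "'a::lattice_ab_group_add"
  by (simp add: pprt_def diff_sup_eq_inf add_inf_distrib_left inf_commute)

lemma pprt_diff_pprt_uminus: "pprt x - pprt (- x) = x"
  for x :: "'a::lattice_ab_group_add"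
  using prts[of x] by (simp add: pprt_neg)

lemma inf_pprt_pprt_uminus: "inf (pprt x) (pprt (- x)) = 0"
  for x :: "'a::lattice_ab_group_add"
proof -
  have "inf (pprt x) (pprt (- x)) = inf (x + pprt (- x)) (0 + pprt (- x))"
    using pprt_diff_pprt_uminus[of x] by (simp add: algebra_simps)
  also have "\<dots> = nprt x + pprt (- x)"
    by (simp add: nprt_def add_inf_distrib_right)
  finally show ?thesis
    by (simp add: pprt_neg)
qed

lemma nonneg_if_inf_eq_zero:
  fixes a b :: "'a::lattice_ab_group_add"
  assumes "inf a b = 0"
  shows "0 \<le> a" "0 \<le> b"
  using assms inf.cobounded1[of a b] inf.cobounded2[of a b] by simp_all

lemma pprt_diff_if_inf_eq_zero:
  fixes a b :: "'a::lattice_ab_group_add"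
  assumes "inf a b = 0"
  shows "pprt (a - b) = a"
proof -
  have "pprt (a - b) = a + sup (- b) (- a)"
    by (simp add: pprt_def add_sup_distrib_left)
  also have "\<dots> = a"
    using assms by (simp add: inf_commute flip: neg_inf_eq_sup)
  finally show ?thesis .
qed

lemma inf_add_le_add_inf:
  fixes a b c :: "'a::lattice_ab_group_add"
  assumes "0 \<le> a" "0 \<le> b" "0 \<le> c"
  shows "inf (a + b) c \<le> inf a c + inf b c"
proof -
  have "inf a c + inf b c = inf (inf (a + b) (a + c)) (inf (c + b) (c + c))"
    by (simp add: add_inf_distrib_left add_inf_distrib_right add.commute inf_commute
        inf_left_commute)
  moreover have "c \<le> a + c" "c \<le> c + b" "c \<le> c + c"
    using assms by (simp_all add: add_increasing add_increasing2)
  ultimately show ?thesis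
    by (simp add: le_infI2)
qed

lemma inf_add_left_eq_zero:
  fixes a b c :: "'a::lattice_ab_group_add"
  assumes ac: "inf a c = 0" and bc: "inf b c = 0"
  shows "inf (a + b) c = 0"
proof (rule order.antisym)
  show "inf (a + b) c \<le> 0"
    using inf_add_le_add_inf[of a b c] nonneg_if_inf_eq_zero[OF ac] nonneg_if_inf_eq_zero[OF bc]
      ac bc
    by simp
  show "0 \<le> inf (a + b) c"
    using nonneg_if_inf_eq_zero[OF ac] nonneg_if_inf_eq_zero[OF bc] by simp
qed

lemma inf_add_right_eq_zero: "inf c a = 0 \<Longrightarrow> inf c b = 0 \<Longrightarrow> inf c (a + b) = 0"
  for a b c :: "'a::lattice_ab_group_add"
  using inf_add_left_eq_zero[of a c b] by (simp add: inf_commute)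

lemma inf_eq_zero_mono:
  fixes a b a' b' :: "'a::lattice_ab_group_add"
  assumes "inf a' b' = 0" "0 \<le> a" "a \<le> a'" "0 \<le> b" "b \<le> b'"
  shows "inf a b = 0"
proof (rule order.antisym)
  show "inf a b \<le> 0"
    using inf_mono[OF assms(3,5)] assms(1) by simp
  show "0 \<le> inf a b"
    using assms(2,4) by simp
qed

lemma inf_add_distrib_if_inf_eq_zero:
  fixes x u v :: "'a::lattice_ab_group_add"
  assumes x: "0 \<le> x" and uv: "inf u v = 0"
  shows "inf x (u + v) = inf x u + inf x v"
proof (rule order.antisym)
  have u: "0 \<le> u" and v: "0 \<le> v"
    using nonneg_if_inf_eq_zero[OF uv] by simp_all
  have "inf (u + v) x \<le> inf u x + inf v x"
    using u v x by (rule inf_add_le_add_inf)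
  then show "inf x (u + v) \<le> inf x u + inf x v"
    by (simp only: inf_commute)
  have "inf (inf x u) (inf x v) = 0"
    by (rule inf_eq_zero_mono[OF uv]) (simp_all add: x u v)
  then have "inf x u + inf x v = sup (inf x u) (inf x v)"
    by (simp add: add_eq_inf_sup[of "inf x u"])
  also have "\<dots> \<le> x"
    by simp
  finally have "inf x u + inf x v \<le> x" .
  moreover have "inf x u + inf x v \<le> u + v"
    by (intro add_mono) simp_all
  ultimately show "inf x u + inf x v \<le> inf x (u + v)"
    by simp
qed

lemma inf_pprt_diff_pprt_diff:
  fixes a b x :: "'a::lattice_ab_group_add"
  assumes "a \<le> b"
  shows "inf (pprt (a - x)) (pprt (x - b)) = 0"
proof (rule inf_eq_zero_mono)
  show "inf (pprt (b - x)) (pprt (x - b)) = 0"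
    using inf_pprt_pprt_uminus[of "b - x"] by simp
  show "pprt (a - x) \<le> pprt (b - x)"
    using assms by (simp add: diff_right_mono)
qed simp_all

lemma scaleR_inf:
  fixes x y :: "'a::vector_lattice"
  assumes "0 \<le> c"
  shows "c *\<^sub>R inf x y = inf (c *\<^sub>R x) (c *\<^sub>R y)"
proof (cases "c = 0")
  case False
  then have c: "0 < c"
    using assms by simp
  let ?m = "inf (c *\<^sub>R x) (c *\<^sub>R y)"
  have "(1 / c) *\<^sub>R ?m \<le> (1 / c) *\<^sub>R (c *\<^sub>R x)" "(1 / c) *\<^sub>R ?m \<le> (1 / c) *\<^sub>R (c *\<^sub>R y)"
    using c by (simp_all only: scaleR_left_mono inf.cobounded1 inf.cobounded2 less_imp_le
        zero_le_divide_1_iff)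
  then have "(1 / c) *\<^sub>R ?m \<le> inf x y"
    using c by simp
  then have "c *\<^sub>R ((1 / c) *\<^sub>R ?m) \<le> c *\<^sub>R inf x y"
    using assms by (rule scaleR_left_mono)
  then have "?m \<le> c *\<^sub>R inf x y"
    using c by simp
  moreover have "c *\<^sub>R inf x y \<le> ?m"
    using assms by (simp add: scaleR_left_mono)
  ultimately show ?thesis
    by (rule order.antisym[rotated])
qed simp

lemma inf_scaleR_eq_zero:
  fixes x y :: "'a::vector_lattice"
  assumes "inf x y = 0" "0 \<le> c" "0 \<le> d"
  shows "inf (c *\<^sub>R x) (d *\<^sub>R y) = 0"
proof (rule inf_eq_zero_mono)
  show "inf (max c d *\<^sub>R x) (max c d *\<^sub>R y) = 0"
    using assms by (simp flip: scaleR_inf)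
qed (use assms nonneg_if_inf_eq_zero[OF assms(1)] in
    \<open>auto intro: scaleR_right_mono scaleR_nonneg_nonneg\<close>)

definition cone_ext :: "('a::lattice_ab_group_add \<Rightarrow> real) \<Rightarrow> 'a \<Rightarrow> real" where
  "cone_ext \<phi> x = \<phi> (pprt x) - \<phi> (pprt (- x))"

lemma cone_ext_diff:
  fixes \<phi> :: "'a::lattice_ab_group_add \<Rightarrow> real"
  assumes add: "\<And>x y. 0 \<le> x \<Longrightarrow> 0 \<le> y \<Longrightarrow> \<phi> (x + y) = \<phi> x + \<phi> y"
    and "0 \<le> a" "0 \<le> b"
  shows "cone_ext \<phi> (a - b) = \<phi> a - \<phi> b"
proof -
  have "pprt (a - b) + b = a + pprt (- (a - b))"
    using pprt_diff_pprt_uminus[of "a - b"] by (simp add: algebra_simps)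
  then have "\<phi> (pprt (a - b)) + \<phi> b = \<phi> a + \<phi> (pprt (- (a - b)))"
    using assms by (metis zero_le_pprt)
  then show ?thesis
    unfolding cone_ext_def by simp
qed

lemma cone_ext_nonneg:
  fixes \<phi> :: "'a::lattice_ab_group_add \<Rightarrow> real"
  assumes add: "\<And>x y. 0 \<le> x \<Longrightarrow> 0 \<le> y \<Longrightarrow> \<phi> (x + y) = \<phi> x + \<phi> y"
    and "0 \<le> x"
  shows "cone_ext \<phi> x = \<phi> x"
  using cone_ext_diff[OF add, of x 0] add[of 0 0] assms(2) by simp

lemma linear_cone_ext:
  fixes \<phi> :: "'a::vector_lattice \<Rightarrow> real"
  assumes add: "\<And>x y. 0 \<le> x \<Longrightarrow> 0 \<le> y \<Longrightarrow> \<phi> (x + y) = \<phi> x + \<phi> y"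
    and hom: "\<And>c x. 0 \<le> c \<Longrightarrow> 0 \<le> x \<Longrightarrow> \<phi> (c *\<^sub>R x) = c * \<phi> x"
  shows "linear (cone_ext \<phi>)"
proof (rule linearI)
  fix x y :: 'a
  have "x + y = (pprt x + pprt y) - (pprt (- x) + pprt (- y))"
    using pprt_diff_pprt_uminus[of x] pprt_diff_pprt_uminus[of y] by (simp add: algebra_simps)
  then have "cone_ext \<phi> (x + y) = \<phi> (pprt x + pprt y) - \<phi> (pprt (- x) + pprt (- y))"
    using cone_ext_diff[OF add] by simp
  then show "cone_ext \<phi> (x + y) = cone_ext \<phi> x + cone_ext \<phi> y"
    by (simp add: add cone_ext_def)
next
  fix c :: real and x :: 'a
  show "cone_ext \<phi> (c *\<^sub>R x) = c *\<^sub>R cone_ext \<phi> x"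
  proof (cases "0 \<le> c")
    case True
    have "c *\<^sub>R x = c *\<^sub>R pprt x - c *\<^sub>R pprt (- x)"
      by (metis pprt_diff_pprt_uminus scaleR_diff_right)
    then have "cone_ext \<phi> (c *\<^sub>R x) = \<phi> (c *\<^sub>R pprt x) - \<phi> (c *\<^sub>R pprt (- x))"
      using True by (simp add: cone_ext_diff[OF add] scaleR_nonneg_nonneg)
    then show ?thesis
      using True by (simp add: hom cone_ext_def right_diff_distrib)
  next
    case False
    have "c *\<^sub>R x = (- c) *\<^sub>R pprt (- x) - (- c) *\<^sub>R pprt x"
      by (metis pprt_diff_pprt_uminus minus_diff_eq scaleR_diff_right scaleR_minus_left)
    then have "cone_ext \<phi> (c *\<^sub>R x) = \<phi> ((- c) *\<^sub>R pprt (- x)) - \<phi> ((- c) *\<^sub>R pprt x)"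
      using False by (simp add: cone_ext_diff[OF add] scaleR_nonneg_nonneg del: scaleR_minus_left)
    then show ?thesis
      using False by (simp add: hom cone_ext_def algebra_simps del: scaleR_minus_left)
  qed
qed

lemma linear_eq_on_cone:
  fixes f g :: "'a::vector_lattice \<Rightarrow> 'b::real_vector"
  assumes "linear f" "linear g" "\<And>x. 0 \<le> x \<Longrightarrow> f x = g x"
  shows "f = g"
proof
  fix x
  have "f (pprt x - pprt (- x)) = g (pprt x - pprt (- x))"
    using assms by (simp add: linear_diff)
  then show "f x = g x"
    by (simp only: pprt_diff_pprt_uminus)
qed

(* Only meaningful on the positive cone; cone_ext extends it linearly. *)
definition riesz_kantorovich :: "('a::vector_lattice \<Rightarrow> real) \<Rightarrow> 'a \<Rightarrow> real" where
  "riesz_kantorovich l x = (SUP v\<in>{0..x}. l v - l (x - v))"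

lemma riesz_kantorovich_upper:
  fixes l :: "'a::vector_lattice \<Rightarrow> real"
  assumes l: "order_bounded_functional l" and v: "0 \<le> v" "v \<le> x"
  shows "l v - l (x - v) \<le> riesz_kantorovich l x"
proof -
  have x: "0 \<le> x"
    using v by order
  obtain U L where U: "\<And>v. v \<in> {0..x} \<Longrightarrow> l v \<le> U" and L: "\<And>v. v \<in> {0..x} \<Longrightarrow> L \<le> l v"
    using l x unfolding order_bounded_functional_def bdd_above_def bdd_below_def by fast
  have "l v - l (x - v) \<le> U - L" if "v \<in> {0..x}" for v
    using U[of v] L[of "x - v"] that by simp
  then have "bdd_above ((\<lambda>v. l v - l (x - v)) ` {0..x})"
    by (intro bdd_aboveI2)
  then show ?thesis
    unfolding riesz_kantorovich_def using v by (intro cSUP_upper) auto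
qed

lemma riesz_kantorovich_least:
  fixes l :: "'a::vector_lattice \<Rightarrow> real"
  assumes "0 \<le> x" "\<And>v. 0 \<le> v \<Longrightarrow> v \<le> x \<Longrightarrow> l v - l (x - v) \<le> c"
  shows "riesz_kantorovich l x \<le> c"
  unfolding riesz_kantorovich_def using assms by (intro cSUP_least) auto

lemma riesz_kantorovich_add:
  fixes l :: "'a::vector_lattice \<Rightarrow> real"
  assumes l: "order_bounded_functional l" and x: "0 \<le> x" and y: "0 \<le> y"
  shows "riesz_kantorovich l (x + y) = riesz_kantorovich l x + riesz_kantorovich l y"
proof (rule order.antisym)
  have lin: "linear l"
    using l unfolding order_bounded_functional_def by simp
  show "riesz_kantorovich l (x + y) \<le> riesz_kantorovich l x + riesz_kantorovich l y"
  proof (rule riesz_kantorovich_least)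
    show "0 \<le> x + y"
      using x y by simp
    fix v assume v: "0 \<le> v" "v \<le> x + y"
    define v1 v2 where "v1 = inf v x" and "v2 = pprt (v - x)"
    have "v = v1 + v2"
      unfolding v1_def v2_def by (simp add: inf_eq_diff_pprt)
    moreover have "0 \<le> v1" "v1 \<le> x" "0 \<le> v2" "v2 \<le> y"
      using v x y by (auto simp: v1_def v2_def pprt_def diff_le_eq add.commute)
    ultimately show "l v - l (x + y - v) \<le> riesz_kantorovich l x + riesz_kantorovich l y"
      using riesz_kantorovich_upper[OF l, of v1 x] riesz_kantorovich_upper[OF l, of v2 y]
      by (simp add: linear_add[OF lin] linear_diff[OF lin] diff_add_eq_diff_diff_swap
          add_diff_add)
  qed
  have "riesz_kantorovich l x \<le> riesz_kantorovich l (x + y) - riesz_kantorovich l y"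
  proof (rule riesz_kantorovich_least[OF x])
    fix v assume v: "0 \<le> v" "v \<le> x"
    have "riesz_kantorovich l y \<le> riesz_kantorovich l (x + y) - (l v - l (x - v))"
    proof (rule riesz_kantorovich_least[OF y])
      fix w assume w: "0 \<le> w" "w \<le> y"
      have "l (v + w) - l (x + y - (v + w)) \<le> riesz_kantorovich l (x + y)"
        using v w by (intro riesz_kantorovich_upper[OF l]) (simp_all add: add_mono)
      moreover have "x + y - (v + w) = (x - v) + (y - w)"
        by (simp add: algebra_simps)
      ultimately show "l w - l (y - w) \<le> riesz_kantorovich l (x + y) - (l v - l (x - v))"
        by (simp add: linear_add[OF lin])
    qed
    then show "l v - l (x - v) \<le> riesz_kantorovich l (x + y) - riesz_kantorovich l y"
      by simp
  qed
  then show "riesz_kantorovich l x + riesz_kantorovich l y \<le> riesz_kantorovich l (x + y)"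
    by simp
qed

lemma riesz_kantorovich_scaleR_le:
  fixes l :: "'a::vector_lattice \<Rightarrow> real"
  assumes l: "order_bounded_functional l" and c: "0 < c" and x: "0 \<le> x"
  shows "riesz_kantorovich l (c *\<^sub>R x) \<le> c * riesz_kantorovich l x"
proof (rule riesz_kantorovich_least)
  have lin: "linear l"
    using l unfolding order_bounded_functional_def by simp
  show "0 \<le> c *\<^sub>R x"
    using c x by (simp add: scaleR_nonneg_nonneg)
  fix v assume v: "0 \<le> v" "v \<le> c *\<^sub>R x"
  have "(1 / c) *\<^sub>R v \<le> (1 / c) *\<^sub>R (c *\<^sub>R x)"
    using c v by (intro scaleR_left_mono) auto
  then have "l ((1 / c) *\<^sub>R v) - l (x - (1 / c) *\<^sub>R v) \<le> riesz_kantorovich l x"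
    using c v by (intro riesz_kantorovich_upper[OF l]) (auto simp: scaleR_nonneg_nonneg)
  moreover have "l v - l (c *\<^sub>R x - v) = c * (l ((1 / c) *\<^sub>R v) - l (x - (1 / c) *\<^sub>R v))"
    using c by (simp add: linear_diff[OF lin] linear_scale[OF lin] algebra_simps)
  ultimately show "l v - l (c *\<^sub>R x - v) \<le> c * riesz_kantorovich l x"
    using c by simp
qed

lemma riesz_kantorovich_scaleR:
  fixes l :: "'a::vector_lattice \<Rightarrow> real"
  assumes l: "order_bounded_functional l" and c: "0 \<le> c" and x: "0 \<le> x"
  shows "riesz_kantorovich l (c *\<^sub>R x) = c * riesz_kantorovich l x"
proof (cases "c = 0")
  case True
  have "riesz_kantorovich l 0 \<le> 0"
    by (rule riesz_kantorovich_least) (auto dest: order.antisym)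
  moreover have "0 \<le> riesz_kantorovich l 0"
    using riesz_kantorovich_upper[OF l, of 0 0] by simp
  ultimately show ?thesis
    using True by simp
next
  case False
  then have c: "0 < c"
    using c by simp
  have "riesz_kantorovich l ((1 / c) *\<^sub>R (c *\<^sub>R x)) \<le> (1 / c) * riesz_kantorovich l (c *\<^sub>R x)"
    using c x by (intro riesz_kantorovich_scaleR_le[OF l]) (auto simp: scaleR_nonneg_nonneg)
  then have "c * riesz_kantorovich l x \<le> riesz_kantorovich l (c *\<^sub>R x)"
    using c by (simp add: field_simps)
  with riesz_kantorovich_scaleR_le[OF l c x] show ?thesis
    by simp
qed

lemma abs_le_riesz_kantorovich:
  fixes l :: "'a::vector_lattice \<Rightarrow> real"
  assumes l: "order_bounded_functional l" and x: "0 \<le> x"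
  shows "\<bar>l x\<bar> \<le> riesz_kantorovich l x"
proof -
  have "l 0 = 0"
    using l unfolding order_bounded_functional_def by (simp add: linear_0)
  then show ?thesis
    using riesz_kantorovich_upper[OF l x order.refl] riesz_kantorovich_upper[OF l order.refl x]
    by simp
qed

lemma linear_cone_ext_riesz_kantorovich:
  "order_bounded_functional l \<Longrightarrow> linear (cone_ext (riesz_kantorovich l))"
  by (intro linear_cone_ext riesz_kantorovich_add riesz_kantorovich_scaleR)

lemma cone_ext_riesz_kantorovich_nonneg:
  "order_bounded_functional l \<Longrightarrow> 0 \<le> x \<Longrightarrow> cone_ext (riesz_kantorovich l) x = riesz_kantorovich l x"
  by (intro cone_ext_nonneg riesz_kantorovich_add)

lemma riesz_kantorovich_le:
  fixes l g :: "'a::vector_lattice \<Rightarrow> real"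
  assumes g: "linear g" and "functional_le l g" "functional_le (\<lambda>x. - l x) g" and x: "0 \<le> x"
  shows "riesz_kantorovich l x \<le> g x"
proof (rule riesz_kantorovich_least[OF x])
  fix v assume "0 \<le> v" "v \<le> x"
  then have "l v \<le> g v" "- l (x - v) \<le> g (x - v)"
    using assms(2,3) unfolding functional_le_def by simp_all
  then show "l v - l (x - v) \<le> g x"
    using linear_diff[OF g, of x v] by simp
qed

lemma order_bounded_cone_ext_riesz_kantorovich:
  fixes l :: "'a::vector_lattice \<Rightarrow> real"
  assumes l: "order_bounded_functional l"
  shows "order_bounded_functional (cone_ext (riesz_kantorovich l))"
proof -
  let ?M = "cone_ext (riesz_kantorovich l)"
  have lin: "linear ?M"
    using l by (rule linear_cone_ext_riesz_kantorovich)
  have "?M a \<le> ?M b" if "a \<le> b" for a b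
    using abs_le_riesz_kantorovich[OF l, of "b - a"]
      cone_ext_riesz_kantorovich_nonneg[OF l, of "b - a"]
      that linear_diff[OF lin, of b a]
    by simp
  then show ?thesis
    unfolding order_bounded_functional_def using lin by (auto intro!: bdd_aboveI2 bdd_belowI2)
qed

lemma functional_modulus_eqI:
  fixes l M :: "'a::vector_lattice \<Rightarrow> real"
  assumes M: "order_bounded_functional M" and upper: "\<And>x. 0 \<le> x \<Longrightarrow> \<bar>l x\<bar> \<le> M x"
    and least: "\<And>g. linear g \<Longrightarrow> functional_le l g \<Longrightarrow> functional_le (\<lambda>x. - l x) g \<Longrightarrow>
      functional_le M g"
  shows "functional_modulus l = M"
  unfolding functional_modulus_def
proof (rule the_equality)
  show "order_bounded_functional M \<and> functional_le l M \<and> functional_le (\<lambda>x. - l x) M \<and>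
    (\<forall>g. order_bounded_functional g \<and> functional_le l g \<and> functional_le (\<lambda>x. - l x) g
      \<longrightarrow> functional_le M g)"
    using M upper least unfolding functional_le_def order_bounded_functional_def
    by (auto simp: abs_le_iff)
next
  fix m assume m: "order_bounded_functional m \<and> functional_le l m \<and>
    functional_le (\<lambda>x. - l x) m \<and>
    (\<forall>g. order_bounded_functional g \<and> functional_le l g \<and> functional_le (\<lambda>x. - l x) g
      \<longrightarrow> functional_le m g)"
  then have "linear m"
    unfolding order_bounded_functional_def by simp
  moreover have "functional_le M m" "functional_le m M"
    using m least[of m] M upper
    unfolding functional_le_def order_bounded_functional_def by (auto simp: abs_le_iff)
  ultimately show "m = M"
    using M unfolding order_bounded_functional_def
    by (intro linear_eq_on_cone) (auto simp: functional_le_def intro: order.antisym)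
qed

lemma functional_modulus_eq:
  fixes l :: "'a::vector_lattice \<Rightarrow> real"
  assumes l: "order_bounded_functional l"
  shows "functional_modulus l = cone_ext (riesz_kantorovich l)"
proof (rule functional_modulus_eqI)
  show "order_bounded_functional (cone_ext (riesz_kantorovich l))"
    using l by (rule order_bounded_cone_ext_riesz_kantorovich)
  show "\<bar>l x\<bar> \<le> cone_ext (riesz_kantorovich l) x" if "0 \<le> x" for x
    using abs_le_riesz_kantorovich[OF l that] cone_ext_riesz_kantorovich_nonneg[OF l that] by simp
  show "functional_le (cone_ext (riesz_kantorovich l)) g"
    if "linear g" "functional_le l g" "functional_le (\<lambda>x. - l x) g" for g
    using riesz_kantorovich_le[OF that] cone_ext_riesz_kantorovich_nonneg[OF l]
    unfolding functional_le_def by simp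
qed

lemma linear_functional_modulus:
  "order_bounded_functional l \<Longrightarrow> linear (functional_modulus l)"
  by (simp add: functional_modulus_eq linear_cone_ext_riesz_kantorovich)

lemma functional_modulus_nonneg_eq:
  "order_bounded_functional l \<Longrightarrow> 0 \<le> x \<Longrightarrow> functional_modulus l x = riesz_kantorovich l x"
  by (simp add: functional_modulus_eq cone_ext_riesz_kantorovich_nonneg)

lemma abs_le_functional_modulus:
  "order_bounded_functional l \<Longrightarrow> 0 \<le> x \<Longrightarrow> \<bar>l x\<bar> \<le> functional_modulus l x"
  by (simp add: functional_modulus_nonneg_eq abs_le_riesz_kantorovich)

lemma functional_modulus_eq_0:
  fixes l :: "'a::vector_lattice \<Rightarrow> real"
  assumes l: "order_bounded_functional l" and x: "0 \<le> x"
    and vanish: "\<And>v. 0 \<le> v \<Longrightarrow> v \<le> x \<Longrightarrow> l v = 0"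
  shows "functional_modulus l x = 0"
proof -
  have "riesz_kantorovich l x \<le> 0"
    using x vanish by (intro riesz_kantorovich_least) simp_all
  then show ?thesis
    using abs_le_functional_modulus[OF l x] functional_modulus_nonneg_eq[OF l x] by simp
qed

definition grothendieck_op :: "'a::lattice_ab_group_add \<Rightarrow> 'a \<Rightarrow> 'a" where
  "grothendieck_op x y = sup (sup x y) 0 + inf (inf x y) 0"

lemma grothendieck_subspace_kernel_iff:
  fixes f :: "'a::vector_lattice \<Rightarrow> real"
  assumes "linear f"
  shows "grothendieck_subspace (kernel f) \<longleftrightarrow>
    (\<forall>x y. f x = 0 \<longrightarrow> f y = 0 \<longrightarrow> f (grothendieck_op x y) = 0)"
proof -
  have "subspace (kernel f)"
    using assms unfolding subspace_def kernel_def by (simp add: linear_0 linear_add linear_scale)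
  then show ?thesis
    unfolding grothendieck_subspace_def kernel_def grothendieck_op_def by auto
qed

lemma grothendieck_op_mult: "grothendieck_op (t * a) (t * b) = t * grothendieck_op a b"
  for t a b :: real
  unfolding grothendieck_op_def
  by (cases "0 \<le> t"; cases "a \<le> b"; cases "a \<le> 0"; cases "b \<le> 0")
    (auto simp: sup_max inf_min max_def min_def mult_le_cancel_left mult_le_cancel_right
      algebra_simps mult_le_0_iff zero_le_mult_iff)

definition riesz_hom :: "('a::vector_lattice \<Rightarrow> real) \<Rightarrow> bool" where
  "riesz_hom \<phi> \<longleftrightarrow> linear \<phi> \<and> (\<forall>x y. \<phi> (sup x y) = max (\<phi> x) (\<phi> y))"

lemma riesz_homI:
  fixes \<phi> :: "'a::vector_lattice \<Rightarrow> real"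
  assumes lin: "linear \<phi>" and pprt: "\<And>x. \<phi> (pprt x) = max (\<phi> x) 0"
  shows "riesz_hom \<phi>"
  unfolding riesz_hom_def
proof (intro conjI allI lin)
  fix x y
  have "\<phi> (sup x y) = \<phi> y + max (\<phi> x - \<phi> y) 0"
    by (simp add: sup_eq_add_pprt pprt linear_add[OF lin] linear_diff[OF lin])
  then show "\<phi> (sup x y) = max (\<phi> x) (\<phi> y)"
    by (simp add: max_def)
qed

lemma riesz_hom_inf:
  assumes "riesz_hom \<phi>"
  shows "\<phi> (inf x y) = min (\<phi> x) (\<phi> y)"
proof -
  have "\<phi> (inf x y) = - \<phi> (sup (- x) (- y))"
    using assms unfolding riesz_hom_def by (simp only: inf_eq_neg_sup linear_neg)
  also have "\<dots> = min (\<phi> x) (\<phi> y)"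
    using assms unfolding riesz_hom_def by (simp add: linear_neg max_def min_def)
  finally show ?thesis .
qed

lemma riesz_hom_pprt: "riesz_hom \<phi> \<Longrightarrow> \<phi> (pprt x) = max (\<phi> x) 0"
  unfolding riesz_hom_def pprt_def by (simp add: linear_0)

lemma riesz_hom_grothendieck_op:
  "riesz_hom \<phi> \<Longrightarrow> \<phi> (grothendieck_op x y) = grothendieck_op (\<phi> x) (\<phi> y)"
  using riesz_hom_inf[of \<phi>] unfolding riesz_hom_def grothendieck_op_def
  by (simp add: linear_add linear_0 sup_max inf_min)

lemma linear_lincomb:
  fixes \<phi> \<psi> :: "'a::real_vector \<Rightarrow> real"
  shows "linear \<phi> \<Longrightarrow> linear \<psi> \<Longrightarrow> linear (\<lambda>x. a * \<phi> x + b * \<psi> x)"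
  using linear_compose_add[OF linear_compose_scale_right[of \<phi> a] linear_compose_scale_right[of \<psi> b]]
  by simp

lemma grothendieck_subspace_kernel_lincomb:
  fixes \<phi> \<psi> :: "'a::vector_lattice \<Rightarrow> real"
  assumes \<phi>: "riesz_hom \<phi>" and \<psi>: "riesz_hom \<psi>"
  shows "grothendieck_subspace (kernel (\<lambda>x. a * \<phi> x + b * \<psi> x))"
proof -
  have "linear (\<lambda>x. a * \<phi> x + b * \<psi> x)"
    using \<phi> \<psi> unfolding riesz_hom_def by (simp add: linear_lincomb)
  moreover have "a * grothendieck_op (\<phi> x) (\<phi> y) + b * grothendieck_op (\<psi> x) (\<psi> y) = 0"
    if x: "a * \<phi> x + b * \<psi> x = 0" and y: "a * \<phi> y + b * \<psi> y = 0" for x y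
  proof (cases "b = 0")
    case True
    then show ?thesis
      using x y by (cases "a = 0") (simp_all add: grothendieck_op_def)
  next
    case False
    then have "\<psi> x = (- a / b) * \<phi> x" "\<psi> y = (- a / b) * \<phi> y"
      using x y by (simp_all add: field_simps)
    then have "grothendieck_op (\<psi> x) (\<psi> y) = (- a / b) * grothendieck_op (\<phi> x) (\<phi> y)"
      by (simp only: grothendieck_op_mult)
    then show ?thesis
      using False by simp
  qed
  ultimately show ?thesis
    by (simp add: grothendieck_subspace_kernel_iff riesz_hom_grothendieck_op[OF \<phi>]
        riesz_hom_grothendieck_op[OF \<psi>])
qed

lemma riesz_hom_if_disjoint:
  fixes \<phi> :: "'a::vector_lattice \<Rightarrow> real"
  assumes lin: "linear \<phi>" and nonneg: "\<And>x. 0 \<le> x \<Longrightarrow> 0 \<le> \<phi> x"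
    and disjoint: "\<And>a b. inf a b = 0 \<Longrightarrow> \<phi> a = 0 \<or> \<phi> b = 0"
  shows "riesz_hom \<phi>"
proof (rule riesz_homI[OF lin])
  fix x
  have "\<phi> x = \<phi> (pprt x) - \<phi> (pprt (- x))"
    using linear_diff[OF lin, of "pprt x" "pprt (- x)"] by (simp add: pprt_diff_pprt_uminus)
  moreover have "\<phi> (pprt x) = 0 \<or> \<phi> (pprt (- x)) = 0"
    using inf_pprt_pprt_uminus by (rule disjoint)
  moreover have "0 \<le> \<phi> (pprt x)" "0 \<le> \<phi> (pprt (- x))"
    by (simp_all add: nonneg)
  ultimately show "\<phi> (pprt x) = max (\<phi> x) 0"
    by auto
qed

lemma linear_proportional_if_kernel_subset:
  fixes \<phi> g :: "'a::real_vector \<Rightarrow> real"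
  assumes \<phi>: "linear \<phi>" and g: "linear g" and ker: "kernel \<phi> \<subseteq> kernel g"
  obtains c where "g = (\<lambda>x. c * \<phi> x)"
proof (cases "\<exists>p. \<phi> p \<noteq> 0")
  case True
  then obtain p where p: "\<phi> p \<noteq> 0"
    by blast
  have "g x = g p / \<phi> p * \<phi> x" for x
  proof -
    have "\<phi> (x - (\<phi> x / \<phi> p) *\<^sub>R p) = 0"
      using p by (simp add: linear_diff[OF \<phi>] linear_scale[OF \<phi>])
    then have "g (x - (\<phi> x / \<phi> p) *\<^sub>R p) = 0"
      using ker unfolding kernel_def by blast
    then show ?thesis
      by (simp add: linear_diff[OF g] linear_scale[OF g])
  qed
  then show ?thesis
    using that by blast
next
  case False
  then have "g = (\<lambda>x. 0 * \<phi> x)"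
    using ker unfolding kernel_def by auto
  then show ?thesis
    using that by blast
qed

definition dominated_by :: "('a::vector_lattice \<Rightarrow> real) \<Rightarrow> ('a \<Rightarrow> real) \<Rightarrow> bool" where
  "dominated_by m g \<longleftrightarrow> linear g \<and> (\<forall>x. 0 \<le> x \<longrightarrow> \<bar>g x\<bar> \<le> m x)"

lemma dominated_by_null: "dominated_by m g \<Longrightarrow> 0 \<le> x \<Longrightarrow> m x = 0 \<Longrightarrow> g x = 0"
  unfolding dominated_by_def by force

lemma riesz_hom_dominated_proportional:
  fixes \<phi> g :: "'a::vector_lattice \<Rightarrow> real"
  assumes \<phi>: "riesz_hom \<phi>" and g: "dominated_by \<phi> g"
  obtains c where "g = (\<lambda>x. c * \<phi> x)"
proof (rule linear_proportional_if_kernel_subset)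
  show "linear \<phi>"
    using \<phi> unfolding riesz_hom_def by simp
  show "linear g"
    using g unfolding dominated_by_def by simp
  show "kernel \<phi> \<subseteq> kernel g"
  proof
    fix x assume "x \<in> kernel \<phi>"
    then have "\<phi> x = 0"
      unfolding kernel_def by simp
    then have "\<phi> (pprt x) = 0" "\<phi> (pprt (- x)) = 0"
      using riesz_hom_pprt[OF \<phi>] \<open>linear \<phi>\<close> by (simp_all add: linear_neg)
    then have "g (pprt x) = 0" "g (pprt (- x)) = 0"
      by (simp_all add: dominated_by_null[OF g])
    then have "g (pprt x - pprt (- x)) = 0"
      by (simp add: linear_diff[OF \<open>linear g\<close>])
    then show "x \<in> kernel g"
      unfolding kernel_def by (simp add: pprt_diff_pprt_uminus)
  qed
qed (use that in blast)

lemma inf_scaleR_max_eq_zero: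
  fixes x :: "'a::vector_lattice"
  assumes "0 \<le> x"
  shows "inf (max a 0 *\<^sub>R x) (max (- a) 0 *\<^sub>R x) = 0"
proof (cases "0 \<le> a")
  case True
  then show ?thesis
    using assms by (simp add: inf_absorb2 scaleR_nonneg_nonneg)
next
  case False
  then have "0 \<le> (- a) *\<^sub>R x"
    using assms by (simp add: scaleR_nonneg_nonneg del: scaleR_minus_left)
  then show ?thesis
    using False by (simp add: inf_absorb1 del: scaleR_minus_left)
qed

locale disjoint_triple =
  fixes p q r :: "'a::vector_lattice"
  assumes inf_pq: "inf p q = 0" and inf_pr: "inf p r = 0" and inf_qr: "inf q r = 0"
begin

definition comb :: "real \<Rightarrow> real \<Rightarrow> real \<Rightarrow> 'a" where
  "comb a b c = a *\<^sub>R p + b *\<^sub>R q + c *\<^sub>R r"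

lemma comb_add: "comb a b c + comb a' b' c' = comb (a + a') (b + b') (c + c')"
  unfolding comb_def by (simp add: algebra_simps)

lemma comb_diff: "comb a b c - comb a' b' c' = comb (a - a') (b - b') (c - c')"
  unfolding comb_def by (simp add: algebra_simps)

lemma pprt_comb: "pprt (comb a b c) = comb (max a 0) (max b 0) (max c 0)"
proof -
  have nonneg: "0 \<le> p" "0 \<le> q" "0 \<le> r"
    using nonneg_if_inf_eq_zero inf_pq inf_qr by blast+
  have disj: "inf q p = 0" "inf r p = 0" "inf r q = 0"
    using inf_pq inf_pr inf_qr by (simp_all add: inf_commute)
  let ?P = "comb (max a 0) (max b 0) (max c 0)"
  let ?N = "comb (max (- a) 0) (max (- b) 0) (max (- c) 0)"
  have "comb a b c = ?P - ?N"
    unfolding comb_diff by (rule arg_cong3[where f = comb]) auto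
  moreover have "inf ?P ?N = 0"
    unfolding comb_def
    by (intro inf_add_left_eq_zero inf_add_right_eq_zero inf_scaleR_max_eq_zero inf_scaleR_eq_zero)
      (simp_all add: nonneg disj inf_pq inf_pr inf_qr)
  ultimately show ?thesis
    by (simp add: pprt_diff_if_inf_eq_zero)
qed

lemma sup_comb: "sup (comb a b c) (comb a' b' c') = comb (max a a') (max b b') (max c c')"
proof -
  have "sup (comb a b c) (comb a' b' c') =
      comb a' b' c' + comb (max (a - a') 0) (max (b - b') 0) (max (c - c') 0)"
    by (simp add: sup_eq_add_pprt comb_diff pprt_comb)
  also have "\<dots> = comb (max a a') (max b b') (max c c')"
    unfolding comb_add by (rule arg_cong3[where f = comb]) auto
  finally show ?thesis .
qed

lemma inf_comb: "inf (comb a b c) (comb a' b' c') = comb (min a a') (min b b') (min c c')"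
proof -
  have "inf (comb a b c) (comb a' b' c') =
      comb a b c - comb (max (a - a') 0) (max (b - b') 0) (max (c - c') 0)"
    by (simp add: inf_eq_diff_pprt comb_diff pprt_comb)
  also have "\<dots> = comb (min a a') (min b b') (min c c')"
    unfolding comb_diff by (rule arg_cong3[where f = comb]) auto
  finally show ?thesis .
qed

lemma grothendieck_op_comb:
  "grothendieck_op (comb a b c) (comb a' b' c') =
    comb (grothendieck_op a a') (grothendieck_op b b') (grothendieck_op c c')"
proof -
  have "comb 0 0 0 = 0"
    by (simp add: comb_def)
  then show ?thesis
    unfolding grothendieck_op_def
    by (metis sup_comb inf_comb comb_add sup_max inf_min)
qed

end

definition has_disjoint_triple :: "('a::vector_lattice \<Rightarrow> real) \<Rightarrow> bool" where
  "has_disjoint_triple f \<longleftrightarrow> (\<exists>p q r. disjoint_triple p q r \<and> f p \<noteq> 0 \<and> f q \<noteq> 0 \<and> f r \<noteq> 0)"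

lemma not_grothendieck_subspace_kernel_if_disjoint_triple:
  fixes f :: "'a::vector_lattice \<Rightarrow> real"
  assumes f: "linear f" and "has_disjoint_triple f"
  shows "\<not> grothendieck_subspace (kernel f)"
proof
  obtain p q r where pqr: "disjoint_triple p q r"
    and fp: "f p \<noteq> 0" and fq: "f q \<noteq> 0" and fr: "f r \<noteq> 0"
    using assms(2) unfolding has_disjoint_triple_def by blast
  interpret disjoint_triple p q r
    by (fact pqr)
  have f_comb: "f (comb a b c) = a * f p + b * f q + c * f r" for a b c
    unfolding comb_def by (simp add: linear_add[OF f] linear_scale[OF f])
  define x y where "x = comb (1 / f p) (- 1 / f q) 0" and "y = comb (1 / f p) 0 (- 1 / f r)"
  have G: "grothendieck_op x y = comb (1 / f p) (- 1 / f q) (- 1 / f r)"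
    unfolding x_def y_def grothendieck_op_comb
    by (rule arg_cong3[where f = comb]) (simp_all add: grothendieck_op_def sup_max inf_min)
  have "f x = 0" "f y = 0" "f (grothendieck_op x y) = - 1"
    unfolding G unfolding x_def y_def f_comb using fp fq fr by simp_all
  moreover assume "grothendieck_subspace (kernel f)"
  ultimately show False
    unfolding grothendieck_subspace_kernel_iff[OF f] by fastforce
qed

lemma has_disjoint_triple_if_modulus:
  fixes l :: "'a::vector_lattice \<Rightarrow> real"
  assumes l: "order_bounded_functional l" and "has_disjoint_triple (functional_modulus l)"
  shows "has_disjoint_triple l"
proof -
  obtain p q r where pqr: "disjoint_triple p q r" and "functional_modulus l p \<noteq> 0"
    "functional_modulus l q \<noteq> 0" "functional_modulus l r \<noteq> 0"
    using assms(2) unfolding has_disjoint_triple_def by blast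
  moreover have "0 \<le> p" "0 \<le> q" "0 \<le> r"
    using pqr nonneg_if_inf_eq_zero unfolding disjoint_triple_def by blast+
  moreover have witness: "\<exists>v. 0 \<le> v \<and> v \<le> x \<and> l v \<noteq> 0"
    if "0 \<le> x" "functional_modulus l x \<noteq> 0" for x
    using functional_modulus_eq_0[OF l] that by blast
  ultimately obtain p' q' r' where
    p': "0 \<le> p'" "p' \<le> p" "l p' \<noteq> 0" and q': "0 \<le> q'" "q' \<le> q" "l q' \<noteq> 0" and
    r': "0 \<le> r'" "r' \<le> r" "l r' \<noteq> 0"
    by meson
  have "disjoint_triple p' q' r'"
    using pqr unfolding disjoint_triple_def by (metis inf_eq_zero_mono p' q' r')
  then show ?thesis
    unfolding has_disjoint_triple_def using p' q' r' by blast
qed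

text \<open>
  Every x \<ge> 0 then splits,
  up to an m-null tail, into its parts below large multiples of p and of q, and band_part g is
  g restricted to the band generated by p.
\<close>
locale band_pair =
  fixes m :: "'a::vector_lattice \<Rightarrow> real" and p q :: 'a
  assumes linear_m: "linear m"
    and m_nonneg: "\<And>x. 0 \<le> x \<Longrightarrow> 0 \<le> m x"
    and no_disjoint_triple: "\<not> has_disjoint_triple m"
    and inf_pq: "inf p q = 0" and m_p_pos: "0 < m p" and m_q_pos: "0 < m q"
begin

lemma p_nonneg: "0 \<le> p" and q_nonneg: "0 \<le> q"
  using nonneg_if_inf_eq_zero[OF inf_pq] by simp_all

lemma m_mono: "x \<le> y \<Longrightarrow> m x \<le> m y"
  using m_nonneg[of "y - x"] linear_diff[OF linear_m, of y x] by simp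

lemma dominated_by_m: "dominated_by m m"
  unfolding dominated_by_def using linear_m m_nonneg by simp

lemma disjoint_triple_null: "disjoint_triple a b c \<Longrightarrow> m a = 0 \<or> m b = 0 \<or> m c = 0"
  using no_disjoint_triple unfolding has_disjoint_triple_def by blast

text \<open>
  For large k, pprt (k p - x) and pprt (k q - x) are charged, and together with the tail
  pprt (x - k (p + q)) they are pairwise disjoint.
\<close>
lemma tail_null_exists:
  assumes x: "0 \<le> x"
  shows "\<exists>k\<ge>0. m (pprt (x - k *\<^sub>R (p + q))) = 0"
proof -
  define k where "k = 1 + m x / m p + m x / m q"
  have "0 \<le> m x"
    using x by (rule m_nonneg)
  then have k: "0 \<le> k" "m x < k * m p" "m x < k * m q"
    using m_p_pos m_q_pos unfolding k_def by (simp_all add: field_simps add_pos_nonneg)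
  define A B C where "A = pprt (k *\<^sub>R p - x)" and "B = pprt (k *\<^sub>R q - x)"
    and "C = pprt (x - k *\<^sub>R (p + q))"
  have "k *\<^sub>R p \<le> k *\<^sub>R (p + q)" "k *\<^sub>R q \<le> k *\<^sub>R (p + q)"
    using k p_nonneg q_nonneg by (simp_all add: scaleR_left_mono)
  then have "inf A C = 0" "inf B C = 0"
    unfolding A_def B_def C_def by (simp_all add: inf_pprt_diff_pprt_diff)
  moreover have "inf A B = 0"
  proof (rule inf_eq_zero_mono)
    show "inf (k *\<^sub>R p) (k *\<^sub>R q) = 0"
      using k inf_pq by (simp add: inf_scaleR_eq_zero)
    show "A \<le> k *\<^sub>R p" "B \<le> k *\<^sub>R q"
      unfolding A_def B_def pprt_def using k x p_nonneg q_nonneg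
      by (auto simp: scaleR_nonneg_nonneg)
  qed (simp_all add: A_def B_def)
  moreover have "0 < m A"
    using m_mono[of "k *\<^sub>R p - x" A] k
    by (simp add: A_def pprt_def linear_diff[OF linear_m] linear_scale[OF linear_m])
  moreover have "0 < m B"
    using m_mono[of "k *\<^sub>R q - x" B] k
    by (simp add: B_def pprt_def linear_diff[OF linear_m] linear_scale[OF linear_m])
  ultimately have "m C = 0"
    using disjoint_triple_null[of A B C] unfolding disjoint_triple_def by auto
  then show ?thesis
    using k unfolding C_def by blast
qed

definition cutoff :: "'a \<Rightarrow> real" where
  "cutoff x = (SOME k. 0 \<le> k \<and> m (pprt (x - k *\<^sub>R (p + q))) = 0)"

lemma cutoff_spec: "0 \<le> x \<Longrightarrow> 0 \<le> cutoff x \<and> m (pprt (x - cutoff x *\<^sub>R (p + q))) = 0"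
  unfolding cutoff_def using tail_null_exists by (rule someI_ex)

lemma tail_null:
  assumes x: "0 \<le> x" and k: "cutoff x \<le> k"
  shows "m (pprt (x - k *\<^sub>R (p + q))) = 0"
proof -
  have "cutoff x *\<^sub>R (p + q) \<le> k *\<^sub>R (p + q)"
    using k p_nonneg q_nonneg by (intro scaleR_right_mono) simp_all
  then have "m (pprt (x - k *\<^sub>R (p + q))) \<le> m (pprt (x - cutoff x *\<^sub>R (p + q)))"
    by (intro m_mono pprt_mono diff_left_mono)
  then show ?thesis
    using cutoff_spec[OF x] m_nonneg[of "pprt (x - k *\<^sub>R (p + q))"] by simp
qed

lemma split_by_pq:
  assumes x: "0 \<le> x" and k: "0 \<le> k"
  shows "x = inf x (k *\<^sub>R p) + inf x (k *\<^sub>R q) + pprt (x - k *\<^sub>R (p + q))"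
proof -
  have "inf (k *\<^sub>R p) (k *\<^sub>R q) = 0"
    using k inf_pq by (simp add: inf_scaleR_eq_zero)
  then have "inf x (k *\<^sub>R (p + q)) = inf x (k *\<^sub>R p) + inf x (k *\<^sub>R q)"
    using x by (simp add: scaleR_add_right inf_add_distrib_if_inf_eq_zero)
  then show ?thesis
    using inf_eq_diff_pprt[of x "k *\<^sub>R (p + q)"] by (simp add: algebra_simps)
qed

lemma dominated_split:
  assumes g: "dominated_by m g" and x: "0 \<le> x" and k: "cutoff x \<le> k"
  shows "g x = g (inf x (k *\<^sub>R p)) + g (inf x (k *\<^sub>R q))"
proof -
  have "0 \<le> k"
    using cutoff_spec[OF x] k by linarith
  then have "g x = g (inf x (k *\<^sub>R p)) + g (inf x (k *\<^sub>R q)) + g (pprt (x - k *\<^sub>R (p + q)))"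
    using g split_by_pq[OF x] unfolding dominated_by_def by (metis linear_add)
  moreover have "g (pprt (x - k *\<^sub>R (p + q))) = 0"
    using tail_null[OF x k] by (intro dominated_by_null[OF g]) simp_all
  ultimately show ?thesis
    by simp
qed

definition component :: "('a \<Rightarrow> real) \<Rightarrow> 'a \<Rightarrow> real" where
  "component g x = g (inf x (cutoff x *\<^sub>R p))"

lemma component_eq:
  assumes g: "dominated_by m g" and x: "0 \<le> x" and k: "cutoff x \<le> k"
  shows "g (inf x (k *\<^sub>R p)) = component g x"
proof -
  let ?K = "cutoff x"
  have le: "inf x (?K *\<^sub>R p) \<le> inf x (k *\<^sub>R p)" "inf x (?K *\<^sub>R q) \<le> inf x (k *\<^sub>R q)"
    using k p_nonneg q_nonneg by (simp_all add: le_infI2 scaleR_right_mono)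
  have "m (inf x (k *\<^sub>R p)) + m (inf x (k *\<^sub>R q)) =
      m (inf x (?K *\<^sub>R p)) + m (inf x (?K *\<^sub>R q))"
    using dominated_split[OF dominated_by_m x k] dominated_split[OF dominated_by_m x order.refl]
    by simp
  then have "m (inf x (k *\<^sub>R p) - inf x (?K *\<^sub>R p)) = 0"
    unfolding linear_diff[OF linear_m] using m_mono[OF le(1)] m_mono[OF le(2)] by linarith
  then have "g (inf x (k *\<^sub>R p) - inf x (?K *\<^sub>R p)) = 0"
    using le(1) by (intro dominated_by_null[OF g]) (simp_all only: diff_ge_0_iff_ge)
  then show ?thesis
    using g unfolding component_def dominated_by_def by (simp add: linear_diff)
qed

lemma component_add:
  assumes g: "dominated_by m g" and x: "0 \<le> x" and y: "0 \<le> y"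
  shows "component g (x + y) = component g x + component g y"
proof -
  define k where "k = max (cutoff (x + y)) (max (cutoff x) (cutoff y))"
  have xy: "0 \<le> x + y"
    using x y by simp
  have kxy: "cutoff (x + y) \<le> k" and kx: "cutoff x \<le> k" and ky: "cutoff y \<le> k"
    unfolding k_def by auto
  have "0 \<le> k *\<^sub>R p" "0 \<le> k *\<^sub>R q"
    using cutoff_spec[OF x] kx p_nonneg q_nonneg by (simp_all add: scaleR_nonneg_nonneg)
  then have sub: "inf (x + y) (k *\<^sub>R p) \<le> inf x (k *\<^sub>R p) + inf y (k *\<^sub>R p)"
    "inf (x + y) (k *\<^sub>R q) \<le> inf x (k *\<^sub>R q) + inf y (k *\<^sub>R q)"
    using x y by (simp_all add: inf_add_le_add_inf)
  define d where "d = inf x (k *\<^sub>R p) + inf y (k *\<^sub>R p) - inf (x + y) (k *\<^sub>R p)"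
  have "m d + m (inf x (k *\<^sub>R q) + inf y (k *\<^sub>R q) - inf (x + y) (k *\<^sub>R q)) = 0"
    unfolding d_def linear_diff[OF linear_m] linear_add[OF linear_m]
    using dominated_split[OF dominated_by_m xy kxy, unfolded linear_add[OF linear_m]]
      dominated_split[OF dominated_by_m x kx] dominated_split[OF dominated_by_m y ky]
    by linarith
  moreover have "0 \<le> m (inf x (k *\<^sub>R q) + inf y (k *\<^sub>R q) - inf (x + y) (k *\<^sub>R q))"
    using sub(2) by (simp add: m_nonneg)
  moreover have "0 \<le> d"
    using sub(1) unfolding d_def by simp
  ultimately have "g d = 0"
    using m_nonneg[of d] by (intro dominated_by_null[OF g]) simp_all
  then show ?thesis
    using g component_eq[OF g xy kxy] component_eq[OF g x kx] component_eq[OF g y ky]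
    unfolding d_def dominated_by_def by (simp add: linear_diff linear_add)
qed

lemma component_scaleR:
  assumes g: "dominated_by m g" and c: "0 \<le> c" and x: "0 \<le> x"
  shows "component g (c *\<^sub>R x) = c * component g x"
proof (cases "c = 0")
  case True
  have "inf 0 (cutoff 0 *\<^sub>R p) = 0"
    using cutoff_spec[of 0] p_nonneg by (simp add: inf_absorb1 scaleR_nonneg_nonneg)
  then show ?thesis
    using True g unfolding component_def dominated_by_def by (simp add: linear_0)
next
  case False
  then have c: "0 < c"
    using c by simp
  have cx: "0 \<le> c *\<^sub>R x"
    using c x by (simp add: scaleR_nonneg_nonneg)
  define k where "k = max (cutoff (c *\<^sub>R x)) (c * cutoff x)"
  have k1: "cutoff (c *\<^sub>R x) \<le> k" and "c * cutoff x \<le> k"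
    unfolding k_def by simp_all
  then have k2: "cutoff x \<le> k / c"
    using c by (simp add: le_divide_eq mult.commute)
  have "inf (c *\<^sub>R x) (k *\<^sub>R p) = c *\<^sub>R inf x ((k / c) *\<^sub>R p)"
    using c by (simp add: scaleR_inf)
  then have "component g (c *\<^sub>R x) = c * g (inf x ((k / c) *\<^sub>R p))"
    using g component_eq[OF g cx k1] unfolding dominated_by_def by (simp add: linear_scale)
  then show ?thesis
    using component_eq[OF g x k2] by simp
qed

lemma abs_component_le: "dominated_by m g \<Longrightarrow> 0 \<le> x \<Longrightarrow> \<bar>component g x\<bar> \<le> component m x"
  unfolding component_def dominated_by_def
  using cutoff_spec[of x] p_nonneg by (simp add: scaleR_nonneg_nonneg)

lemma component_m_disjoint:
  assumes ab: "inf a b = 0"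
  shows "component m a = 0 \<or> component m b = 0"
proof -
  define k where "k = max (cutoff a) (cutoff b)"
  have a: "0 \<le> a" and b: "0 \<le> b"
    using nonneg_if_inf_eq_zero[OF ab] by simp_all
  have ka: "cutoff a \<le> k" and kb: "cutoff b \<le> k"
    unfolding k_def by simp_all
  have k: "0 \<le> k"
    using cutoff_spec[OF a] ka by simp
  have kp: "inf (k *\<^sub>R p) q = 0"
    using inf_scaleR_eq_zero[OF inf_pq k, of 1] by simp
  have "0 \<le> k *\<^sub>R p"
    using k p_nonneg by (simp add: scaleR_nonneg_nonneg)
  then have "disjoint_triple (inf a (k *\<^sub>R p)) (inf b (k *\<^sub>R p)) q"
    unfolding disjoint_triple_def
    using ab kp a b q_nonneg by (auto intro: inf_eq_zero_mono)
  then have "m (inf a (k *\<^sub>R p)) = 0 \<or> m (inf b (k *\<^sub>R p)) = 0"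
    using disjoint_triple_null m_q_pos by force
  then show ?thesis
    using component_eq[OF dominated_by_m a ka] component_eq[OF dominated_by_m b kb] by auto
qed

definition band_part :: "('a \<Rightarrow> real) \<Rightarrow> 'a \<Rightarrow> real" where
  "band_part g = cone_ext (component g)"

lemma linear_band_part: "dominated_by m g \<Longrightarrow> linear (band_part g)"
  unfolding band_part_def by (intro linear_cone_ext component_add component_scaleR)

lemma band_part_nonneg: "dominated_by m g \<Longrightarrow> 0 \<le> x \<Longrightarrow> band_part g x = component g x"
  unfolding band_part_def by (intro cone_ext_nonneg component_add)

lemma riesz_hom_band_part: "riesz_hom (band_part m)"
proof (rule riesz_hom_if_disjoint)
  show "linear (band_part m)"
    using dominated_by_m by (rule linear_band_part)
  show "0 \<le> band_part m x" if "0 \<le> x" for x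
    using abs_component_le[OF dominated_by_m that] band_part_nonneg[OF dominated_by_m that] by simp
  show "band_part m a = 0 \<or> band_part m b = 0" if "inf a b = 0" for a b
    using component_m_disjoint[OF that] nonneg_if_inf_eq_zero[OF that]
    by (simp add: band_part_nonneg[OF dominated_by_m])
qed

lemma band_part_proportional:
  assumes g: "dominated_by m g"
  obtains c where "band_part g = (\<lambda>x. c * band_part m x)"
proof (rule riesz_hom_dominated_proportional[OF riesz_hom_band_part])
  show "dominated_by (band_part m) (band_part g)"
    unfolding dominated_by_def
    using linear_band_part[OF g] abs_component_le[OF g]
    by (simp add: band_part_nonneg[OF g] band_part_nonneg[OF dominated_by_m])
qed (use that in blast)

end

lemma grothendieck_subspace_kernel_if_band_pair:
  assumes "band_pair m p q" and f: "dominated_by m f"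
  shows "grothendieck_subspace (kernel f)"
proof -
  interpret P: band_pair m p q
    by fact
  interpret Q: band_pair m q p
  proof (rule band_pair.intro)
    show "inf q p = 0"
      using P.inf_pq by (simp add: inf_commute)
  qed (fact P.linear_m P.m_nonneg P.no_disjoint_triple P.m_q_pos P.m_p_pos)+
  obtain a where a: "P.band_part f = (\<lambda>x. a * P.band_part m x)"
    using P.band_part_proportional[OF f] .
  obtain b where b: "Q.band_part f = (\<lambda>x. b * Q.band_part m x)"
    using Q.band_part_proportional[OF f] .
  have "f x = a * P.band_part m x + b * Q.band_part m x" if x: "0 \<le> x" for x
  proof -
    define k where "k = max (P.cutoff x) (Q.cutoff x)"
    have kp: "P.cutoff x \<le> k" and kq: "Q.cutoff x \<le> k"
      unfolding k_def by simp_all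
    have "f x = f (inf x (k *\<^sub>R p)) + f (inf x (k *\<^sub>R q))"
      by (rule P.dominated_split[OF f x kp])
    also have "\<dots> = P.band_part f x + Q.band_part f x"
      by (simp add: P.component_eq[OF f x kp] Q.component_eq[OF f x kq]
          P.band_part_nonneg[OF f x] Q.band_part_nonneg[OF f x])
    finally show ?thesis
      by (simp add: a b)
  qed
  then have "f = (\<lambda>x. a * P.band_part m x + b * Q.band_part m x)"
    using f P.linear_band_part[OF P.dominated_by_m] Q.linear_band_part[OF Q.dominated_by_m]
    unfolding dominated_by_def by (intro linear_eq_on_cone linear_lincomb) simp_all
  then show ?thesis
    using grothendieck_subspace_kernel_lincomb[OF P.riesz_hom_band_part Q.riesz_hom_band_part]
    by simp
qed

lemma grothendieck_subspace_kernel_if_no_disjoint_triple: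
  fixes m f :: "'a::vector_lattice \<Rightarrow> real"
  assumes m: "linear m" and no_triple: "\<not> has_disjoint_triple m" and f: "dominated_by m f"
  shows "grothendieck_subspace (kernel f)"
proof -
  have m_nonneg: "0 \<le> m x" if "0 \<le> x" for x
    using f that unfolding dominated_by_def by force
  show ?thesis
  proof (cases "\<exists>p q. inf p q = 0 \<and> 0 < m p \<and> 0 < m q")
    case True
    then obtain p q where "inf p q = 0" "0 < m p" "0 < m q"
      by blast
    then have "band_pair m p q"
      by (intro band_pair.intro m m_nonneg no_triple)
    then show ?thesis
      using f by (rule grothendieck_subspace_kernel_if_band_pair)
  next
    case False
    have "riesz_hom m"
    proof (rule riesz_hom_if_disjoint[OF m m_nonneg])
      show "m a = 0 \<or> m b = 0" if "inf a b = 0" for a b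
        using False that m_nonneg[of a] m_nonneg[of b] nonneg_if_inf_eq_zero[OF that] by force
    qed
    moreover obtain c where "f = (\<lambda>x. c * m x + 0 * m x)"
      using riesz_hom_dominated_proportional[OF \<open>riesz_hom m\<close> f]
      by (metis add_0_right mult_zero_left)
    ultimately show ?thesis
      using grothendieck_subspace_kernel_lincomb by metis
  qed
qed

theorem lemma3:
  fixes l :: "'a::vector_lattice \<Rightarrow> real"
  assumes "order_bounded_functional l"
  shows "grothendieck_subspace (kernel l) \<longleftrightarrow> grothendieck_subspace (kernel (functional_modulus l))"
proof -
  let ?m = "functional_modulus l"
  have l: "linear l"
    using assms unfolding order_bounded_functional_def by simp
  have m: "linear ?m"
    using assms by (rule linear_functional_modulus)
  have dom_l: "dominated_by ?m l" and dom_m: "dominated_by ?m ?m"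
    using abs_le_functional_modulus[OF assms] l m unfolding dominated_by_def by force+
  show ?thesis
  proof
    assume "grothendieck_subspace (kernel l)"
    then have "\<not> has_disjoint_triple l"
      using not_grothendieck_subspace_kernel_if_disjoint_triple[OF l] by blast
    then have "\<not> has_disjoint_triple ?m"
      using has_disjoint_triple_if_modulus[OF assms] by blast
    then show "grothendieck_subspace (kernel ?m)"
      by (rule grothendieck_subspace_kernel_if_no_disjoint_triple[OF m _ dom_m])
  next
    assume "grothendieck_subspace (kernel ?m)"
    then have "\<not> has_disjoint_triple ?m"
      using not_grothendieck_subspace_kernel_if_disjoint_triple[OF m] by blast
    then show "grothendieck_subspace (kernel l)"
      by (rule grothendieck_subspace_kernel_if_no_disjoint_triple[OF m _ dom_l])
  qed
qed

end
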